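(* For $x,\theta>0$ let $d_{\rm IS}(x,\theta)=\frac{x}{\theta}-\log\frac{x}{\theta}-1$. Let $g:[0,\infty)\to[0,\infty)$ be measurable with $0<\int_0^\infty \frac1t g(d_{\rm IS}(t,1))\,dt<\infty$, and for $\theta>0$ let $X$ have density $p(x\mid\theta)=\frac{1}{C}\frac{1}{x}g(d_{\rm IS}(x,\theta))$ on $(0,\infty)$, where $C=\int_0^\infty \frac1x g(d_{\rm IS}(x,\theta))\,dx$. Then: (i) $C=\int_0^\infty \frac1t g(d_{\rm IS}(t,1))\,dt$, in particular $C$ does not depend on $\theta$; (ii) $\mathbb{E}[X]<\infty$ if and only if $g\in L^1(\mathbb{R}_+)$, and in that case $\mathbb{E}[X]=\theta$ and $C=\int_0^\infty g(d_{\rm IS}(x,1))\,dx$.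
   Context: $d_{\rm IS}$ is the Itakura–Saito distance (the Bregman divergence generated by $\phi(x)=-\log x$); the density $p(x\mid\theta)$ is called the IS distribution with generator $g$. *)

theory Defs
  imports "HOL-Analysis.Analysis"
begin

definition d_IS :: "real \<Rightarrow> real \<Rightarrow> real" where
  "d_IS x \<theta> = x / \<theta> - ln (x / \<theta>) - 1"

definition IS_C :: "(real \<Rightarrow> real) \<Rightarrow> real \<Rightarrow> ennreal" where
  "IS_C g \<theta> = (\<integral>\<^sup>+ x \<in> {0<..}. ennreal ((1 / x) * g (d_IS x \<theta>)) \<partial>lborel)"

definition IS_density :: "(real \<Rightarrow> real) \<Rightarrow> real \<Rightarrow> real \<Rightarrow> real" where
  "IS_density g \<theta> x =
     (if 0 < x then (1 / enn2real (IS_C g \<theta>)) * (1 / x) * g (d_IS x \<theta>) else 0)"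

definition IS_mean :: "(real \<Rightarrow> real) \<Rightarrow> real \<Rightarrow> ennreal" where
  "IS_mean g \<theta> = (\<integral>\<^sup>+ x \<in> {0<..}. ennreal (x * IS_density g \<theta> x) \<partial>lborel)"

end

theory Submission
  imports Defs
begin

text \<open>
  Write \<open>\<phi> t = d_IS t 1\<close>. Since \<open>d_IS x \<theta> = \<phi> (x / \<theta>)\<close>, the substitution \<open>x = \<theta> t\<close>
  shows that the normalising constant \<open>C\<close> does not depend on \<open>\<theta>\<close> and that
  \<open>E[X] = \<theta> / C \<cdot> \<integral> g (\<phi> t) dt\<close>. As \<open>\<phi>' t = 1 - 1 / t\<close>, substituting \<open>u = \<phi> t\<close> on the two
  monotone branches \<open>(0, 1)\<close> and \<open>(1, \<infinity>)\<close> of \<open>\<phi>\<close> gives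
  \<open>\<integral>\<^sub>0\<^sup>\<infinity> g = \<integral>\<^sub>1\<^sup>\<infinity> (1 - 1/t) g (\<phi> t) dt = \<integral>\<^sub>0\<^sup>1 (1/t - 1) g (\<phi> t) dt\<close>.
  Together with the identity \<open>g (\<phi> t) = g (\<phi> t) / t + (1 - 1/t) g (\<phi> t)\<close> this yields
  \<open>\<integral> g \<le> \<integral> g (\<phi> t) dt \<le> C + \<integral> g\<close> and, after cancelling a finite \<open>\<integral> g\<close>,
  \<open>\<integral> g (\<phi> t) dt = C\<close>, i.e. \<open>E[X] = \<theta>\<close>.
\<close>

lemma d_IS_eq_d_IS_div: "d_IS x \<theta> = d_IS (x / \<theta>) 1"
  by (simp add: d_IS_def)

lemma d_IS_nonneg: "0 < x \<Longrightarrow> 0 < \<theta> \<Longrightarrow> 0 \<le> d_IS x \<theta>"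
  using ln_le_minus_one[of "x / \<theta>"] by (simp add: d_IS_def)

lemma borel_measurable_d_IS [measurable]: "(\<lambda>x. d_IS x \<theta>) \<in> borel_measurable borel"
  unfolding d_IS_def by measurable

lemma d_IS_has_field_derivative:
  "0 < t \<Longrightarrow> ((\<lambda>t. d_IS t 1) has_field_derivative 1 - 1 / t) (at t)"
  unfolding d_IS_def by (auto intro!: derivative_eq_intros simp: field_simps)

lemma continuous_on_d_IS: "continuous_on {0<..} (\<lambda>t. d_IS t 1)"
  unfolding d_IS_def by (auto intro!: continuous_intros)

lemma strict_mono_on_d_IS: "strict_mono_on {1..} (\<lambda>t. d_IS t 1)"
proof (rule strict_mono_onI)
  fix a b :: real assume ab: "a \<in> {1..}" "a < b"
  show "d_IS a 1 < d_IS b 1"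
  proof (rule DERIV_pos_imp_increasing_open[OF \<open>a < b\<close>])
    fix x assume "a < x"
    with ab show "\<exists>y. ((\<lambda>t. d_IS t 1) has_real_derivative y) (at x) \<and> 0 < y"
      using d_IS_has_field_derivative[of x] by (intro exI[of _ "1 - 1 / x"]) (auto simp: field_simps)
  qed (use ab in \<open>auto intro: continuous_on_subset[OF continuous_on_d_IS]\<close>)
qed

lemma strict_antimono_on_d_IS: "strict_antimono_on {0<..1} (\<lambda>t. d_IS t 1)"
proof (rule monotone_onI)
  fix a b :: real assume ab: "a \<in> {0<..1}" "b \<in> {0<..1}" "a < b"
  show "d_IS b 1 < d_IS a 1"
  proof (rule DERIV_neg_imp_decreasing_open[OF \<open>a < b\<close>])
    fix x assume "a < x" "x < b"
    with ab show "\<exists>y. ((\<lambda>t. d_IS t 1) has_real_derivative y) (at x) \<and> y < 0"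
      using d_IS_has_field_derivative[of x] by (intro exI[of _ "1 - 1 / x"]) (auto simp: field_simps)
  qed (use ab in \<open>auto intro: continuous_on_subset[OF continuous_on_d_IS]\<close>)
qed

lemma d_IS_1_1 [simp]: "d_IS 1 1 = 0"
  by (simp add: d_IS_def)

lemma d_IS_image_Ioi_1: "(\<lambda>t. d_IS t 1) ` {1<..} = {0<..}"
proof (intro equalityI subsetI)
  fix u assume "u \<in> (\<lambda>t. d_IS t 1) ` {1<..}"
  then show "u \<in> {0<..}"
    using strict_mono_onD[OF strict_mono_on_d_IS, of 1] by auto
next
  fix u :: real assume u: "u \<in> {0<..}"
  have "ln (2 * u + 2) = ln 2 + ln (1 + u)"
    using u ln_mult[of 2 "1 + u"] by (simp add: algebra_simps)
  also have "\<dots> \<le> ln 2 + u"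
    using ln_add_one_self_le_self[of u] u by simp
  finally have "u \<le> d_IS (2 * u + 2) 1"
    using ln_2_less_1 by (simp add: d_IS_def)
  then obtain x where "1 \<le> x" "x \<le> 2 * u + 2" "d_IS x 1 = u"
    using IVT'[of "\<lambda>t. d_IS t 1" 1 u "2 * u + 2"] u
      continuous_on_subset[OF continuous_on_d_IS, of "{1..2 * u + 2}"] by fastforce
  moreover from this u have "x \<noteq> 1" by auto
  ultimately show "u \<in> (\<lambda>t. d_IS t 1) ` {1<..}" by force
qed

lemma d_IS_image_Ioo_0_1: "(\<lambda>t. d_IS t 1) ` {0<..<1} = {0<..}"
proof (intro equalityI subsetI)
  fix u assume "u \<in> (\<lambda>t. d_IS t 1) ` {0<..<1}"
  then show "u \<in> {0<..}"
    using monotone_onD[OF strict_antimono_on_d_IS, of _ 1] by auto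
next
  fix u :: real assume u: "u \<in> {0<..}"
  define a where "a = exp (- (u + 1))"
  have "0 < a" "a \<le> 1" "u \<le> d_IS a 1"
    using u by (auto simp: a_def d_IS_def)
  then obtain x where "a \<le> x" "x \<le> 1" "d_IS x 1 = u"
    using IVT2'[of "\<lambda>t. d_IS t 1" 1 u a] u
      continuous_on_subset[OF continuous_on_d_IS, of "{a..1}"] by fastforce
  moreover from this u \<open>0 < a\<close> have "x \<noteq> 1" "0 < x" by auto
  ultimately show "u \<in> (\<lambda>t. d_IS t 1) ` {0<..<1}" by force
qed

lemma set_nn_integral_lebesgue_eq_integral_if:
  fixes h :: "'a::euclidean_space \<Rightarrow> real"
  assumes [measurable]: "A \<in> sets lebesgue" "h \<in> borel_measurable lebesgue"
    and h_nonneg: "\<And>x. 0 \<le> h x"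
  shows "(\<integral>\<^sup>+x\<in>A. ennreal (h x) \<partial>lebesgue)
       = (if h absolutely_integrable_on A then ennreal (integral A h) else \<infinity>)"
proof -
  have "(\<integral>\<^sup>+x\<in>A. ennreal (h x) \<partial>lebesgue) = (\<integral>\<^sup>+x. ennreal (indicator A x *\<^sub>R h x) \<partial>lebesgue)"
    by (intro nn_integral_cong) (simp add: indicator_def)
  also have "\<dots> = (if h absolutely_integrable_on A then ennreal (integral A h) else \<infinity>)"
  proof (cases "h absolutely_integrable_on A")
    case True
    then show ?thesis
      using set_lebesgue_integral_eq_integral(2)[OF True] h_nonneg
      unfolding set_integrable_def set_lebesgue_integral_def
      by (subst nn_integral_eq_integral) auto
  next
    case False
    then show ?thesis
      using h_nonneg unfolding set_integrable_def
      by (subst nn_integral_nonneg_infinite) auto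
  qed
  finally show ?thesis .
qed

lemma nn_integral_change_of_variables_1:
  fixes f \<phi> \<phi>' :: "real \<Rightarrow> real"
  assumes [measurable]: "S \<in> sets borel" "\<phi> ` S \<in> sets borel" "f \<in> borel_measurable borel"
      "(\<lambda>x. \<bar>\<phi>' x\<bar> * f (\<phi> x)) \<in> borel_measurable borel"
    and f_nonneg: "\<And>y. 0 \<le> f y"
    and \<phi>': "\<And>x. x \<in> S \<Longrightarrow> (\<phi> has_field_derivative \<phi>' x) (at x within S)"
    and inj: "inj_on \<phi> S"
  shows "(\<integral>\<^sup>+y\<in>\<phi> ` S. ennreal (f y) \<partial>lborel) = (\<integral>\<^sup>+x\<in>S. ennreal (\<bar>\<phi>' x\<bar> * f (\<phi> x)) \<partial>lborel)"
proof -
  let ?g = "\<lambda>x. \<bar>\<phi>' x\<bar> * f (\<phi> x)"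
  have S: "S \<in> sets lebesgue" by simp
  have integral_eq: "integral (\<phi> ` S) f = integral S ?g" if "?g absolutely_integrable_on S"
    using has_absolute_integral_change_of_variables_1'[OF S \<phi>' inj, of f "integral S ?g"] that
    by simp
  have "(\<integral>\<^sup>+y\<in>\<phi> ` S. ennreal (f y) \<partial>lebesgue) = (\<integral>\<^sup>+x\<in>S. ennreal (?g x) \<partial>lebesgue)"
    using absolutely_integrable_change_of_variables_1'[OF S \<phi>' inj, of f] integral_eq f_nonneg
    by (simp add: set_nn_integral_lebesgue_eq_integral_if measurable_completion)
  then show ?thesis
    by (simp add: nn_integral_completion)
qed

lemma set_nn_integral_pos_scale:
  fixes F :: "real \<Rightarrow> ennreal"
  assumes [measurable]: "F \<in> borel_measurable borel" and c: "0 < c"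
  shows "(\<integral>\<^sup>+x\<in>{0<..}. F x \<partial>lborel) = ennreal c * (\<integral>\<^sup>+t\<in>{0<..}. F (c * t) \<partial>lborel)"
proof -
  have "(\<integral>\<^sup>+x\<in>{0<..}. F x \<partial>lborel)
      = ennreal c * (\<integral>\<^sup>+t. F (0 + c * t) * indicator {0<..} (0 + c * t) \<partial>lborel)"
    using c by (subst nn_integral_real_affine[where c = c and t = 0]) auto
  also have "(\<lambda>t. F (0 + c * t) * indicator {0<..} (0 + c * t)) = (\<lambda>t. F (c * t) * indicator {0<..} t)"
    using c by (auto simp: indicator_def zero_less_mult_iff)
  finally show ?thesis .
qed

lemma borel_measurable_if_restrict_space:
  fixes g :: "'a::topological_space \<Rightarrow> 'b::real_normed_vector"
  assumes "g \<in> borel_measurable (restrict_space borel A)" and "A \<in> sets borel"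
  shows "(\<lambda>u. if u \<in> A then g u else 0) \<in> borel_measurable borel"
proof -
  have "(\<lambda>u. indicator A u *\<^sub>R g u) \<in> borel_measurable borel"
    using assms by (subst (asm) borel_measurable_restrict_space_iff) auto
  also have "(\<lambda>u. indicator A u *\<^sub>R g u) = (\<lambda>u. if u \<in> A then g u else 0)"
    by (auto simp: indicator_def)
  finally show ?thesis .
qed

context
  fixes G :: "real \<Rightarrow> real"
  assumes G_measurable [measurable]: "G \<in> borel_measurable borel"
    and G_nonneg: "\<And>u. 0 \<le> G u"
begin

lemma set_nn_integral_Ioi_eq_d_IS:
  assumes [measurable]: "S \<in> sets borel"
    and S: "S \<subseteq> {0<..}" "inj_on (\<lambda>t. d_IS t 1) S" "(\<lambda>t. d_IS t 1) ` S = {0<..}"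
  shows "(\<integral>\<^sup>+u\<in>{0<..}. ennreal (G u) \<partial>lborel)
     = (\<integral>\<^sup>+t\<in>S. ennreal (\<bar>1 - 1 / t\<bar> * G (d_IS t 1)) \<partial>lborel)"
  using nn_integral_change_of_variables_1[of S "\<lambda>t. d_IS t 1" G "\<lambda>t. 1 - 1 / t"] S
  by (auto simp: G_nonneg intro!: has_field_derivative_at_within d_IS_has_field_derivative)

lemma set_nn_integral_d_IS_Ioi_1:
  "(\<integral>\<^sup>+t\<in>{1<..}. ennreal ((1 - 1 / t) * G (d_IS t 1)) \<partial>lborel)
     = (\<integral>\<^sup>+u\<in>{0<..}. ennreal (G u) \<partial>lborel)"
proof -
  have "strict_mono_on {1<..} (\<lambda>t. d_IS t 1)"
    by (rule monotone_on_subset[OF strict_mono_on_d_IS]) auto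
  then have "inj_on (\<lambda>t. d_IS t 1) {1<..}"
    by (rule strict_mono_on_imp_inj_on)
  then have "(\<integral>\<^sup>+u\<in>{0<..}. ennreal (G u) \<partial>lborel)
      = (\<integral>\<^sup>+t\<in>{1<..}. ennreal (\<bar>1 - 1 / t\<bar> * G (d_IS t 1)) \<partial>lborel)"
    by (intro set_nn_integral_Ioi_eq_d_IS) (auto simp: d_IS_image_Ioi_1)
  also have "\<dots> = (\<integral>\<^sup>+t\<in>{1<..}. ennreal ((1 - 1 / t) * G (d_IS t 1)) \<partial>lborel)"
    by (intro nn_integral_cong) (auto simp: indicator_def)
  finally show ?thesis ..
qed

lemma set_nn_integral_d_IS_Ioo_0_1:
  "(\<integral>\<^sup>+t\<in>{0<..<1}. ennreal ((1 / t - 1) * G (d_IS t 1)) \<partial>lborel)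
     = (\<integral>\<^sup>+u\<in>{0<..}. ennreal (G u) \<partial>lborel)"
proof -
  have "strict_antimono_on {0<..<1} (\<lambda>t. d_IS t 1)"
    by (rule monotone_on_subset[OF strict_antimono_on_d_IS]) auto
  then have "inj_on (\<lambda>t. d_IS t 1) {0<..<1}"
    by (simp add: strict_antimono_iff_antimono)
  then have "(\<integral>\<^sup>+u\<in>{0<..}. ennreal (G u) \<partial>lborel)
      = (\<integral>\<^sup>+t\<in>{0<..<1}. ennreal (\<bar>1 - 1 / t\<bar> * G (d_IS t 1)) \<partial>lborel)"
    by (intro set_nn_integral_Ioi_eq_d_IS) (auto simp: d_IS_image_Ioo_0_1)
  also have "\<dots> = (\<integral>\<^sup>+t\<in>{0<..<1}. ennreal ((1 / t - 1) * G (d_IS t 1)) \<partial>lborel)"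
    by (intro nn_integral_cong) (auto simp: indicator_def field_simps)
  finally show ?thesis ..
qed

lemma set_nn_integral_le_set_nn_integral_d_IS:
  "(\<integral>\<^sup>+u\<in>{0<..}. ennreal (G u) \<partial>lborel) \<le> (\<integral>\<^sup>+t\<in>{0<..}. ennreal (G (d_IS t 1)) \<partial>lborel)"
  unfolding set_nn_integral_d_IS_Ioi_1[symmetric]
  by (intro nn_integral_mono)
     (auto simp: indicator_def G_nonneg intro!: ennreal_leI mult_left_le_one_le)

lemma set_nn_integral_d_IS_le:
  "(\<integral>\<^sup>+t\<in>{0<..}. ennreal (G (d_IS t 1)) \<partial>lborel)
     \<le> (\<integral>\<^sup>+t\<in>{0<..}. ennreal (1 / t * G (d_IS t 1)) \<partial>lborel) + (\<integral>\<^sup>+u\<in>{0<..}. ennreal (G u) \<partial>lborel)"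
proof -
  have "ennreal (G (d_IS t 1)) * indicator {0<..} t
      \<le> ennreal (1 / t * G (d_IS t 1)) * indicator {0<..} t
        + ennreal ((1 - 1 / t) * G (d_IS t 1)) * indicator {1<..} t" for t :: real
  proof (cases "t \<le> 1")
    case True
    have "G (d_IS t 1) \<le> 1 / t * G (d_IS t 1)" if "0 < t"
      using mult_right_mono[of 1 "1 / t", OF _ G_nonneg] True that by simp
    then show ?thesis
      using True by (auto simp: indicator_def intro!: ennreal_leI)
  next
    case False
    then have "G (d_IS t 1) = 1 / t * G (d_IS t 1) + (1 - 1 / t) * G (d_IS t 1)"
      by (simp add: algebra_simps)
    with False show ?thesis
      using G_nonneg[of "d_IS t 1"] by (auto simp: indicator_def ennreal_plus[symmetric])
  qed
  then show ?thesis
    unfolding set_nn_integral_d_IS_Ioi_1[symmetric]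
    by (subst nn_integral_add[symmetric]) (auto intro!: nn_integral_mono)
qed

lemma set_nn_integral_d_IS_eq_inverse_weighted:
  assumes "(\<integral>\<^sup>+u\<in>{0<..}. ennreal (G u) \<partial>lborel) < \<infinity>"
  shows "(\<integral>\<^sup>+t\<in>{0<..}. ennreal (G (d_IS t 1)) \<partial>lborel)
     = (\<integral>\<^sup>+t\<in>{0<..}. ennreal (1 / t * G (d_IS t 1)) \<partial>lborel)"
proof -
  let ?L = "\<integral>\<^sup>+u\<in>{0<..}. ennreal (G u) \<partial>lborel"
  have pointwise:
    "ennreal (G (d_IS t 1)) * indicator {0<..} t + ennreal ((1 / t - 1) * G (d_IS t 1)) * indicator {0<..<1} t
      = ennreal (1 / t * G (d_IS t 1)) * indicator {0<..} t
        + ennreal ((1 - 1 / t) * G (d_IS t 1)) * indicator {1<..} t" for t :: real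
  proof -
    consider "t \<le> 0" | "0 < t" "t < 1" | "t = 1" | "1 < t"
      by linarith
    then show ?thesis
    proof cases
      case 2
      then have "0 \<le> (1 / t - 1) * G (d_IS t 1)"
        using G_nonneg[of "d_IS t 1"] by simp
      then have "ennreal (G (d_IS t 1)) + ennreal ((1 / t - 1) * G (d_IS t 1))
          = ennreal (G (d_IS t 1) + (1 / t - 1) * G (d_IS t 1))"
        using G_nonneg by (simp add: ennreal_plus)
      with 2 show ?thesis
        by (simp add: indicator_def algebra_simps)
    next
      case 4
      then have "G (d_IS t 1) = 1 / t * G (d_IS t 1) + (1 - 1 / t) * G (d_IS t 1)"
        by (simp add: algebra_simps)
      with 4 show ?thesis
        using G_nonneg[of "d_IS t 1"] by (auto simp: indicator_def ennreal_plus[symmetric])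
    qed (auto simp: indicator_def)
  qed
  have "(\<integral>\<^sup>+t\<in>{0<..}. ennreal (G (d_IS t 1)) \<partial>lborel) + ?L
      = (\<integral>\<^sup>+t. ennreal (G (d_IS t 1)) * indicator {0<..} t
                 + ennreal ((1 / t - 1) * G (d_IS t 1)) * indicator {0<..<1} t \<partial>lborel)"
    unfolding set_nn_integral_d_IS_Ioo_0_1[symmetric] by (rule nn_integral_add[symmetric]; measurable)
  also have "\<dots> = (\<integral>\<^sup>+t. ennreal (1 / t * G (d_IS t 1)) * indicator {0<..} t
                 + ennreal ((1 - 1 / t) * G (d_IS t 1)) * indicator {1<..} t \<partial>lborel)"
    by (rule nn_integral_cong) (rule pointwise)
  also have "\<dots> = (\<integral>\<^sup>+t\<in>{0<..}. ennreal (1 / t * G (d_IS t 1)) \<partial>lborel) + ?L"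
    unfolding set_nn_integral_d_IS_Ioi_1[symmetric] by (rule nn_integral_add; measurable)
  finally have "(\<integral>\<^sup>+t\<in>{0<..}. ennreal (G (d_IS t 1)) \<partial>lborel) + ?L
      = (\<integral>\<^sup>+t\<in>{0<..}. ennreal (1 / t * G (d_IS t 1)) \<partial>lborel) + ?L" .
  then show ?thesis
    using assms by (simp add: add.commute[of _ ?L] ennreal_add_left_cancel less_top[symmetric])
qed

lemma set_integrable_Ici_iff:
  "set_integrable lborel {0..} G \<longleftrightarrow> (\<integral>\<^sup>+u\<in>{0<..}. ennreal (G u) \<partial>lborel) < \<infinity>"
proof -
  have "(\<integral>\<^sup>+u. ennreal (norm (indicator {0..} u *\<^sub>R G u)) \<partial>lborel)
      = (\<integral>\<^sup>+u\<in>{0<..}. ennreal (G u) \<partial>lborel)"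
    by (intro nn_integral_cong_AE, use AE_lborel_singleton[of 0] in eventually_elim)
       (auto simp: indicator_def G_nonneg)
  then show ?thesis
    unfolding set_integrable_def by (simp add: integrable_iff_bounded)
qed

lemma IS_C_eq_IS_C_1:
  assumes "0 < \<theta>"
  shows "IS_C G \<theta> = IS_C G 1"
proof -
  have "IS_C G \<theta>
      = ennreal \<theta> * (\<integral>\<^sup>+t\<in>{0<..}. ennreal (1 / (\<theta> * t) * G (d_IS (\<theta> * t) \<theta>)) \<partial>lborel)"
    unfolding IS_C_def by (rule set_nn_integral_pos_scale[OF _ assms]) measurable
  also have "\<dots> = (\<integral>\<^sup>+t. ennreal \<theta> * (ennreal (1 / (\<theta> * t) * G (d_IS (\<theta> * t) \<theta>))
                                   * indicator {0<..} t) \<partial>lborel)"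
    by (rule nn_integral_cmult[symmetric]) measurable
  also have "\<dots> = IS_C G 1"
    unfolding IS_C_def using assms
    by (intro nn_integral_cong)
       (auto simp: indicator_def ennreal_mult[symmetric] G_nonneg d_IS_eq_d_IS_div[of "\<theta> * _"])
  finally show ?thesis .
qed

lemma IS_mean_eq:
  assumes "0 < \<theta>"
  shows "IS_mean G \<theta>
    = ennreal (1 / enn2real (IS_C G \<theta>)) * (ennreal \<theta> * (\<integral>\<^sup>+t\<in>{0<..}. ennreal (G (d_IS t 1)) \<partial>lborel))"
proof -
  let ?c = "1 / enn2real (IS_C G \<theta>)"
  have "IS_mean G \<theta> = (\<integral>\<^sup>+x. ennreal ?c * (ennreal (G (d_IS x \<theta>)) * indicator {0<..} x) \<partial>lborel)"
    unfolding IS_mean_def IS_density_def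
    by (intro nn_integral_cong) (auto simp: indicator_def ennreal_mult[symmetric] G_nonneg)
  also have "\<dots> = ennreal ?c * (\<integral>\<^sup>+x\<in>{0<..}. ennreal (G (d_IS x \<theta>)) \<partial>lborel)"
    by (rule nn_integral_cmult) measurable
  also have "(\<integral>\<^sup>+x\<in>{0<..}. ennreal (G (d_IS x \<theta>)) \<partial>lborel)
      = ennreal \<theta> * (\<integral>\<^sup>+t\<in>{0<..}. ennreal (G (d_IS (\<theta> * t) \<theta>)) \<partial>lborel)"
    by (rule set_nn_integral_pos_scale[OF _ assms]) measurable
  also have "(\<integral>\<^sup>+t\<in>{0<..}. ennreal (G (d_IS (\<theta> * t) \<theta>)) \<partial>lborel)
      = (\<integral>\<^sup>+t\<in>{0<..}. ennreal (G (d_IS t 1)) \<partial>lborel)"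
    using assms by (simp add: d_IS_eq_d_IS_div[of "\<theta> * _"])
  finally show ?thesis .
qed

lemma IS_mean_finite_iff:
  assumes C: "0 < IS_C G 1" "IS_C G 1 < \<infinity>" and \<theta>: "0 < \<theta>"
  shows "IS_mean G \<theta> < \<infinity> \<longleftrightarrow> set_integrable lborel {0..} G"
proof -
  let ?M = "\<integral>\<^sup>+t\<in>{0<..}. ennreal (G (d_IS t 1)) \<partial>lborel"
  let ?L = "\<integral>\<^sup>+u\<in>{0<..}. ennreal (G u) \<partial>lborel"
  have "0 < enn2real (IS_C G \<theta>)"
    using C by (simp add: IS_C_eq_IS_C_1[OF \<theta>] enn2real_positive_iff)
  then have "IS_mean G \<theta> < \<infinity> \<longleftrightarrow> ?M < \<infinity>"
    using \<theta> by (auto simp: IS_mean_eq ennreal_mult_less_top top_unique)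
  also have "\<dots> \<longleftrightarrow> ?L < \<infinity>"
  proof
    show "?M < \<infinity> \<Longrightarrow> ?L < \<infinity>"
      using set_nn_integral_le_set_nn_integral_d_IS by (rule le_less_trans)
    show "?L < \<infinity> \<Longrightarrow> ?M < \<infinity>"
      using le_less_trans[OF set_nn_integral_d_IS_le] C(2) unfolding IS_C_def
      by simp
  qed
  finally show ?thesis
    by (simp add: set_integrable_Ici_iff)
qed

lemma IS_C_eq_set_nn_integral_d_IS:
  assumes "set_integrable lborel {0..} G" "0 < \<theta>"
  shows "IS_C G \<theta> = (\<integral>\<^sup>+t\<in>{0<..}. ennreal (G (d_IS t 1)) \<partial>lborel)"
  using set_nn_integral_d_IS_eq_inverse_weighted assms
  unfolding IS_C_eq_IS_C_1[OF assms(2)] by (simp add: set_integrable_Ici_iff IS_C_def)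

lemma IS_mean_eq_theta:
  assumes C: "0 < IS_C G 1" "IS_C G 1 < \<infinity>" and "set_integrable lborel {0..} G" and \<theta>: "0 < \<theta>"
  shows "IS_mean G \<theta> = \<theta>"
proof -
  define c where "c = enn2real (IS_C G \<theta>)"
  have c: "IS_C G \<theta> = ennreal c" "0 < c"
    using C by (auto simp: c_def IS_C_eq_IS_C_1[OF \<theta>] less_top enn2real_positive_iff)
  have "(\<integral>\<^sup>+t\<in>{0<..}. ennreal (G (d_IS t 1)) \<partial>lborel) = ennreal c"
    using IS_C_eq_set_nn_integral_d_IS[OF assms(3) \<theta>] c(1) by simp
  then have "IS_mean G \<theta> = ennreal (1 / c) * (ennreal \<theta> * ennreal c)"
    using IS_mean_eq[OF \<theta>] c by simp
  also have "\<dots> = ennreal (1 / c * (\<theta> * c))"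
    using c \<theta> by (simp add: ennreal_mult'[symmetric])
  also have "1 / c * (\<theta> * c) = \<theta>"
    using c by simp
  finally show ?thesis .
qed

end

lemma IS_C_cong:
  assumes "\<And>u. 0 \<le> u \<Longrightarrow> g u = h u" and "0 < \<theta>"
  shows "IS_C g \<theta> = IS_C h \<theta>"
  unfolding IS_C_def using assms d_IS_nonneg by (intro nn_integral_cong) (auto simp: indicator_def)

lemma IS_mean_cong:
  assumes "\<And>u. 0 \<le> u \<Longrightarrow> g u = h u" and "0 < \<theta>"
  shows "IS_mean g \<theta> = IS_mean h \<theta>"
  unfolding IS_mean_def IS_density_def using assms d_IS_nonneg
  by (intro nn_integral_cong) (auto simp: indicator_def IS_C_cong[OF assms])

theorem mainTheorem4:
  fixes g :: "real \<Rightarrow> real" and \<theta> :: real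
  assumes g_meas: "g \<in> borel_measurable (restrict_space borel {0..})"
    and g_nonneg: "\<And>u. 0 \<le> u \<Longrightarrow> 0 \<le> g u"
    and C_pos: "0 < (\<integral>\<^sup>+ t \<in> {0<..}. ennreal ((1 / t) * g (d_IS t 1)) \<partial>lborel)"
    and C_fin: "(\<integral>\<^sup>+ t \<in> {0<..}. ennreal ((1 / t) * g (d_IS t 1)) \<partial>lborel) < \<infinity>"
    and theta_pos: "0 < \<theta>"
  shows "IS_C g \<theta> = (\<integral>\<^sup>+ t \<in> {0<..}. ennreal ((1 / t) * g (d_IS t 1)) \<partial>lborel)
     \<and> (IS_mean g \<theta> < \<infinity> \<longleftrightarrow> set_integrable lborel {0..} g)
     \<and> (set_integrable lborel {0..} g \<longrightarrow>
          IS_mean g \<theta> = ennreal \<theta> \<and>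
          IS_C g \<theta> = (\<integral>\<^sup>+ x \<in> {0<..}. ennreal (g (d_IS x 1)) \<partial>lborel))"
proof -
  define G where "G u = (if u \<in> {0..} then g u else 0)" for u
  have G_meas: "G \<in> borel_measurable borel"
    unfolding G_def using g_meas by (rule borel_measurable_if_restrict_space) simp
  have G_nonneg: "0 \<le> G u" for u
    by (simp add: G_def g_nonneg)
  have g_G: "g u = G u" if "0 \<le> u" for u
    using that by (simp add: G_def)
  have C: "IS_C g \<theta> = IS_C G 1" "IS_C g 1 = IS_C G 1"
    using IS_C_cong[OF g_G] IS_C_eq_IS_C_1[OF G_meas G_nonneg theta_pos] theta_pos by auto
  have mean: "IS_mean g \<theta> = IS_mean G \<theta>"
    using IS_mean_cong[OF g_G theta_pos] .
  have integrable: "set_integrable lborel {0..} g \<longleftrightarrow> set_integrable lborel {0..} G"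
    by (rule set_integrable_cong) (auto simp: g_G)
  have M: "(\<integral>\<^sup>+x\<in>{0<..}. ennreal (g (d_IS x 1)) \<partial>lborel) = (\<integral>\<^sup>+x\<in>{0<..}. ennreal (G (d_IS x 1)) \<partial>lborel)"
    by (intro nn_integral_cong) (auto simp: indicator_def g_G d_IS_nonneg)
  have C_G: "0 < IS_C G 1" "IS_C G 1 < \<infinity>"
    using C_pos C_fin unfolding IS_C_def[of g 1, symmetric] C(2) by auto
  show ?thesis
    using IS_mean_finite_iff[OF G_meas G_nonneg C_G theta_pos]
      IS_mean_eq_theta[OF G_meas G_nonneg C_G _ theta_pos]
      IS_C_eq_set_nn_integral_d_IS[OF G_meas G_nonneg _ zero_less_one]
    unfolding IS_C_def[of g 1, symmetric] C mean integrable M by simp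
qed

end
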